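(* Let $L\in\mathbb R^{N\times N}$ be symmetric positive semidefinite with eigenvalues $0=\lambda_1<\lambda_2\le\cdots\le\lambda_N$ and orthonormal eigenvectors $u_1,\dots,u_N$ (so $\ker L = \mathrm{span}(u_1)$). Let $P\in\mathbb R^{n\times N}$ have full row rank, let $P^+$ be its Moore–Penrose pseudoinverse, $\Pi = P^+P$, and suppose $\Pi u_1 = u_1$. Let $L_c = (P^+)^\top L P^+$ with eigenvalues $\tilde\lambda_1\le\cdots\le\tilde\lambda_n$, $\gamma_1 = \lambda_{\min}((PP^\top)^{-1})$, $\gamma_2 = \lambda_{\max}((PP^\top)^{-1})$. Let $k\le n$ and $\mathbf U_k = \mathrm{span}(u_1,\dots,u_k)$. If $L_c$ and $L$ are $(\mathbf U_k,\epsilon_k)$-similar and $\epsilon_k^2<\lambda_2/\lambda_k$, then $$\gamma_1\lambda_k\le\tilde\lambda_k\le\gamma_2\,\frac{(1+\epsilon_k)^2}{1-\epsilon_k^2(\lambda_k/\lambda_2)}\,\lambda_k.$$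
   Context: For PSD $M$, $\|y\|_M=\sqrt{y^\top My}$. $L_c$ and $L$ are $(\mathbf R,\epsilon)$-similar if $\epsilon\ge0$ and $\|x-P^+Px\|_L\le\epsilon\|x\|_L$ for all $x\in\mathbf R$. *)

theory Defs
  imports "HOL-Analysis.Analysis"
begin

definition is_pinv :: "real^'a^'b \<Rightarrow> real^'b^'a \<Rightarrow> bool" where
  "is_pinv P X \<longleftrightarrow> P ** X ** P = P \<and> X ** P ** X = X \<and>
     transpose (P ** X) = P ** X \<and> transpose (X ** P) = X ** P"

definition pinv :: "real^'a^'b \<Rightarrow> real^'b^'a" where
  "pinv P = (THE X. is_pinv P X)"

definition eigvals :: "real^'n^'n \<Rightarrow> real set" where
  "eigvals A = {c. \<exists>v. v \<noteq> 0 \<and> A *v v = c *\<^sub>R v}"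

definition lambda_min :: "real^'n^'n \<Rightarrow> real" where
  "lambda_min A = Min (eigvals A)"

definition lambda_max :: "real^'n^'n \<Rightarrow> real" where
  "lambda_max A = Max (eigvals A)"

definition mnorm :: "real^'n^'n \<Rightarrow> real^'n \<Rightarrow> real" where
  "mnorm M y = sqrt (y \<bullet> (M *v y))"

definition similar_on :: "real^'N^'n \<Rightarrow> real^'N^'N \<Rightarrow> (real^'N) set \<Rightarrow> real \<Rightarrow> bool" where
  "similar_on P L R \<epsilon> \<longleftrightarrow> \<epsilon> \<ge> 0 \<and>
     (\<forall>x\<in>R. mnorm L (x - (pinv P ** P) *v x) \<le> \<epsilon> * mnorm L x)"

end

theory Submission
  imports Defs
begin

text \<open>Both inequalities are Courant--Fischer arguments comparing the Rayleigh quotients of \<open>L\<close>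
  and \<open>L\<^sub>c = (P\<^sup>+)\<^sup>T L P\<^sup>+\<close>, via \<open>y\<^sup>T L\<^sub>c y = (P\<^sup>+y)\<^sup>T L (P\<^sup>+y)\<close>
  and \<open>|P\<^sup>+y|\<^sup>2 = y\<^sup>T (PP\<^sup>T)\<^sup>-\<^sup>1 y\<close>.
  For the lower bound, \<open>P\<^sup>+\<close> is injective, so \<open>P\<^sup>+ span(v\<^sub>1..v\<^sub>k)\<close> is \<open>k\<close>-dimensional
  and meets \<open>span(u\<^sub>k..u\<^sub>N)\<close> in some \<open>x = P\<^sup>+y \<noteq> 0\<close>; then
  \<open>\<gamma>\<^sub>1 \<lambda>\<^sub>k |y|\<^sup>2 \<le> \<lambda>\<^sub>k |x|\<^sup>2 \<le> x\<^sup>T L x = y\<^sup>T L\<^sub>c y \<le> lt\<^sub>k |y|\<^sup>2\<close>.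
  For the upper bound, the residual \<open>e = x - \<Pi>x\<close> of \<open>x \<in> U\<^sub>k\<close> is orthogonal to \<open>u\<^sub>1\<close>, because
  \<open>\<Pi>\<close> is an orthogonal projection fixing \<open>u\<^sub>1\<close>; so the spectral gap and the similarity give
  \<open>\<lambda>\<^sub>2 |e|\<^sup>2 \<le> \<parallel>e\<parallel>\<^sub>L\<^sup>2 \<le> \<epsilon>\<^sup>2 \<lambda>\<^sub>k |x|\<^sup>2\<close>, i.e.
  \<open>|\<Pi>x|\<^sup>2 \<ge> (1 - \<epsilon>\<^sup>2 \<lambda>\<^sub>k/\<lambda>\<^sub>2) |x|\<^sup>2\<close>. Hence \<open>P\<close> is injective on \<open>U\<^sub>k\<close>,
  \<open>P U\<^sub>k\<close> meets \<open>span(v\<^sub>k..v\<^sub>n)\<close> in some \<open>y = Px \<noteq> 0\<close>, and the triangle inequality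
  \<open>\<parallel>\<Pi>x\<parallel>\<^sub>L \<le> (1 + \<epsilon>) \<parallel>x\<parallel>\<^sub>L\<close> together with \<open>|\<Pi>x|\<^sup>2 = |P\<^sup>+y|\<^sup>2 \<le> \<gamma>\<^sub>2 |y|\<^sup>2\<close>
  bounds \<open>lt\<^sub>k |y|\<^sup>2 \<le> y\<^sup>T L\<^sub>c y = \<parallel>\<Pi>x\<parallel>\<^sub>L\<^sup>2\<close>.\<close>

section \<open>Orthonormal families of eigenvectors\<close>

definition orthonormal_on :: "'i set \<Rightarrow> ('i \<Rightarrow> 'a::real_inner) \<Rightarrow> bool" where
  "orthonormal_on I w \<longleftrightarrow> (\<forall>i\<in>I. \<forall>j\<in>I. w i \<bullet> w j = (if i = j then 1 else 0))"

lemma orthonormal_on_subset: "orthonormal_on I w \<Longrightarrow> J \<subseteq> I \<Longrightarrow> orthonormal_on J w"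
  unfolding orthonormal_on_def by blast

lemma orthonormal_on_inj:
  assumes "orthonormal_on I w"
  shows "inj_on w I"
proof (rule inj_onI)
  fix i j assume "i \<in> I" "j \<in> I" "w i = w j"
  then have "w i \<bullet> w j = 1" using assms by (metis orthonormal_on_def)
  with \<open>i \<in> I\<close> \<open>j \<in> I\<close> show "i = j" using assms by (metis orthonormal_on_def zero_neq_one)
qed

lemma orthonormal_on_independent:
  assumes "orthonormal_on I w"
  shows "independent (w ` I)"
proof (rule pairwise_orthogonal_independent)
  show "pairwise orthogonal (w ` I)"
    using assms by (auto simp: orthonormal_on_def pairwise_def orthogonal_def)
  show "0 \<notin> w ` I"
    using assms by (force simp: orthonormal_on_def)
qed

lemma dim_span_orthonormal_on: "orthonormal_on I w \<Longrightarrow> dim (span (w ` I)) = card I"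
  by (metis dim_span_eq_card_independent orthonormal_on_independent orthonormal_on_inj card_image)

lemma span_orthonormal_on_eq_UNIV:
  fixes w :: "'i \<Rightarrow> real^'m"
  assumes "orthonormal_on I w" "card I = CARD('m)"
  shows "span (w ` I) = UNIV"
proof -
  have "UNIV \<subseteq> span (w ` I)"
  proof (rule card_ge_dim_independent)
    show "dim (UNIV :: (real^'m) set) \<le> card (w ` I)"
      using assms dim_subset_UNIV_cart by (metis card_image orthonormal_on_inj)
  qed (use assms orthonormal_on_independent in auto)
  then show ?thesis by auto
qed

lemma orthonormal_on_span_expansion:
  assumes "finite I" "orthonormal_on I w" "x \<in> span (w ` I)"
  shows "(\<Sum>i\<in>I. (x \<bullet> w i) *\<^sub>R w i) = x"
proof -
  define y where "y = (\<Sum>i\<in>I. (x \<bullet> w i) *\<^sub>R w i)"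
  have yw: "y \<bullet> w j = x \<bullet> w j" if "j \<in> I" for j
  proof -
    have "y \<bullet> w j = (\<Sum>i\<in>I. if i = j then x \<bullet> w j else 0)"
      using assms(2) that by (auto simp: y_def inner_sum_left orthonormal_on_def intro!: sum.cong)
    then show ?thesis using assms(1) that by simp
  qed
  have "orthogonal (x - y) z" if "z \<in> span (w ` I)" for z
  proof (rule orthogonal_to_span[OF that])
    show "orthogonal (x - y) z'" if "z' \<in> w ` I" for z'
      using that yw by (auto simp: orthogonal_def inner_diff_left)
  qed
  moreover have "y \<in> span (w ` I)"
    unfolding y_def by (intro span_sum span_scale span_base) auto
  then have "x - y \<in> span (w ` I)"
    using assms(3) by (rule span_diff[rotated])
  ultimately show ?thesis
    by (metis orthogonal_self eq_iff_diff_eq_0 y_def)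
qed

lemma inner_self_span_orthonormal_on:
  assumes "finite I" "orthonormal_on I w" "x \<in> span (w ` I)"
  shows "x \<bullet> x = (\<Sum>i\<in>I. (x \<bullet> w i)\<^sup>2)"
proof -
  have "x \<bullet> x = x \<bullet> (\<Sum>i\<in>I. (x \<bullet> w i) *\<^sub>R w i)"
    by (simp only: orthonormal_on_span_expansion[OF assms])
  then show ?thesis by (simp add: inner_sum_right power2_eq_square)
qed

lemma quadratic_form_span_eigvecs:
  fixes A :: "real^'m^'m"
  assumes "finite I" "orthonormal_on I w" "\<forall>i\<in>I. A *v w i = c i *\<^sub>R w i" "x \<in> span (w ` I)"
  shows "x \<bullet> (A *v x) = (\<Sum>i\<in>I. c i * (x \<bullet> w i)\<^sup>2)"
proof -
  have "A *v x = A *v (\<Sum>i\<in>I. (x \<bullet> w i) *\<^sub>R w i)"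
    by (simp only: orthonormal_on_span_expansion[OF assms(1,2,4)])
  also have "\<dots> = (\<Sum>i\<in>I. (c i * (x \<bullet> w i)) *\<^sub>R w i)"
    using assms(3) by (auto simp: vec.sum matrix_vector_mult_scaleR mult.commute intro!: sum.cong)
  finally show ?thesis
    by (simp add: inner_sum_right power2_eq_square mult.assoc)
qed

lemma rayleigh_span_eigvecs_le:
  fixes A :: "real^'m^'m"
  assumes "finite I" "orthonormal_on I w" "\<forall>i\<in>I. A *v w i = c i *\<^sub>R w i" "x \<in> span (w ` I)"
    and "\<forall>i\<in>I. c i \<le> b"
  shows "x \<bullet> (A *v x) \<le> b * (x \<bullet> x)"
proof -
  have "x \<bullet> (A *v x) = (\<Sum>i\<in>I. c i * (x \<bullet> w i)\<^sup>2)"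
    by (rule quadratic_form_span_eigvecs[OF assms(1-4)])
  also have "\<dots> \<le> (\<Sum>i\<in>I. b * (x \<bullet> w i)\<^sup>2)"
    using assms(5) by (intro sum_mono mult_right_mono) auto
  also have "\<dots> = b * (x \<bullet> x)"
    by (simp add: inner_self_span_orthonormal_on[OF assms(1,2,4)] sum_distrib_left)
  finally show ?thesis .
qed

lemma rayleigh_span_eigvecs_ge:
  fixes A :: "real^'m^'m"
  assumes "finite I" "orthonormal_on I w" "\<forall>i\<in>I. A *v w i = c i *\<^sub>R w i" "x \<in> span (w ` I)"
    and "\<forall>i\<in>I. b \<le> c i"
  shows "b * (x \<bullet> x) \<le> x \<bullet> (A *v x)"
proof -
  have "b * (x \<bullet> x) = (\<Sum>i\<in>I. b * (x \<bullet> w i)\<^sup>2)"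
    by (simp add: inner_self_span_orthonormal_on[OF assms(1,2,4)] sum_distrib_left)
  also have "\<dots> \<le> (\<Sum>i\<in>I. c i * (x \<bullet> w i)\<^sup>2)"
    using assms(5) by (intro sum_mono mult_right_mono) auto
  also have "\<dots> = x \<bullet> (A *v x)"
    by (rule quadratic_form_span_eigvecs[OF assms(1-4), symmetric])
  finally show ?thesis .
qed

lemma spectral_gap_rayleigh:
  fixes A :: "real^'m^'m" and w :: "nat \<Rightarrow> real^'m"
  assumes "orthonormal_on {1..CARD('m)} w" "\<forall>i\<in>{1..CARD('m)}. A *v w i = c i *\<^sub>R w i"
    and "mono_on {1..CARD('m)} c" "x \<bullet> w 1 = 0"
  shows "c 2 * (x \<bullet> x) \<le> x \<bullet> (A *v x)"
proof -
  have x: "x \<in> span (w ` {1..CARD('m)})"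
    using span_orthonormal_on_eq_UNIV[OF assms(1)] by simp
  have "c 2 * (x \<bullet> w i)\<^sup>2 \<le> c i * (x \<bullet> w i)\<^sup>2" if "i \<in> {1..CARD('m)}" for i
  proof (cases "i = 1")
    case False
    then have "c 2 \<le> c i" using assms(3) that by (auto intro: mono_onD)
    then show ?thesis by (simp add: mult_right_mono)
  qed (use assms(4) in simp)
  then have "(\<Sum>i\<in>{1..CARD('m)}. c 2 * (x \<bullet> w i)\<^sup>2) \<le> (\<Sum>i\<in>{1..CARD('m)}. c i * (x \<bullet> w i)\<^sup>2)"
    by (rule sum_mono)
  then show ?thesis
    by (simp add: quadratic_form_span_eigvecs[OF _ assms(1,2) x]
        inner_self_span_orthonormal_on[OF _ assms(1) x] sum_distrib_left)
qed

lemma subspace_Int_nonzero: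
  fixes S T :: "(real^'m) set"
  assumes "subspace S" "subspace T" "CARD('m) < dim S + dim T"
  obtains x where "x \<in> S" "x \<in> T" "x \<noteq> 0"
proof (rule ccontr)
  assume "\<not> thesis"
  with that have "S \<inter> T \<subseteq> {0}" by auto
  then have "dim (S \<inter> T) = 0" using dim_subset[of "S \<inter> T" "{0}"] by simp
  moreover have "dim {x + y |x y. x \<in> S \<and> y \<in> T} \<le> CARD('m)" by (rule dim_subset_UNIV_cart)
  ultimately show False using dim_sums_Int[OF assms(1,2)] assms(3) by linarith
qed

lemma subspace_rayleigh_ge_eigval:
  fixes A :: "real^'m^'m" and w :: "nat \<Rightarrow> real^'m"
  assumes "orthonormal_on {1..CARD('m)} w" "\<forall>i\<in>{1..CARD('m)}. A *v w i = c i *\<^sub>R w i"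
    and "mono_on {1..CARD('m)} c" "subspace S" "1 \<le> k" "k \<le> dim S"
  obtains x where "x \<in> S" "x \<noteq> 0" "c k * (x \<bullet> x) \<le> x \<bullet> (A *v x)"
proof -
  let ?T = "span (w ` {k..CARD('m)})"
  have km: "k \<le> CARD('m)" using assms(6) dim_subset_UNIV_cart[of S] by linarith
  have orth: "orthonormal_on {k..CARD('m)} w"
    using assms(5) by (intro orthonormal_on_subset[OF assms(1)]) auto
  then have "dim ?T = CARD('m) + 1 - k" by (simp only: dim_span_orthonormal_on card_atLeastAtMost)
  with assms(6) km have "CARD('m) < dim S + dim ?T" by linarith
  then obtain x where x: "x \<in> S" "x \<in> ?T" "x \<noteq> 0"
    using subspace_Int_nonzero[OF assms(4) subspace_span] by blast
  have "c k * (x \<bullet> x) \<le> x \<bullet> (A *v x)"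
    using assms(2,3,5) km orth x(2)
    by (intro rayleigh_span_eigvecs_ge[where I = "{k..CARD('m)}"]) (auto intro: mono_onD)
  with x that show ?thesis by blast
qed

section \<open>Positive semidefinite forms\<close>

lemma inner_transpose_mult: "(transpose A *v x) \<bullet> y = x \<bullet> ((A::real^'a^'b) *v y)"
  by (simp add: dot_lmul_matrix)

lemma inner_symmetric_mult:
  fixes A :: "real^'m^'m"
  assumes "transpose A = A"
  shows "x \<bullet> (A *v y) = (A *v x) \<bullet> y"
  by (metis assms inner_transpose_mult)

lemma quadratic_form_add_scaleR:
  fixes A :: "real^'m^'m"
  assumes "transpose A = A"
  shows "(x + t *\<^sub>R y) \<bullet> (A *v (x + t *\<^sub>R y))
    = x \<bullet> (A *v x) + 2 * t * (y \<bullet> (A *v x)) + t\<^sup>2 * (y \<bullet> (A *v y))"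
proof -
  have "x \<bullet> (A *v y) = y \<bullet> (A *v x)"
    using inner_symmetric_mult[OF assms, of x y] by (simp add: inner_commute)
  then show ?thesis
    by (simp add: matrix_vector_right_distrib matrix_vector_mult_scaleR inner_add_left
        inner_add_right power2_eq_square algebra_simps inner_commute[of y x])
qed

lemma nonneg_quadratic_discriminant:
  fixes a b c :: real
  assumes nonneg: "\<forall>t. 0 \<le> a + 2 * t * b + t\<^sup>2 * c" and "0 \<le> c"
  shows "b\<^sup>2 \<le> a * c"
proof (cases "c = 0")
  case False
  then have "0 \<le> a + 2 * (- b / c) * b + (- b / c)\<^sup>2 * c" using nonneg by blast
  also have "\<dots> = a - b\<^sup>2 / c" using False by (simp add: power2_eq_square field_simps)
  finally show ?thesis using False assms(2) by (simp add: field_simps)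
next
  case True
  have "b = 0"
  proof (rule ccontr)
    assume "b \<noteq> 0"
    have "0 \<le> a + 2 * (- (a + 1) / (2 * b)) * b + (- (a + 1) / (2 * b))\<^sup>2 * c" using nonneg by blast
    also have "\<dots> = -1" using True \<open>b \<noteq> 0\<close> by (simp add: field_simps)
    finally show False by simp
  qed
  then show ?thesis using True by simp
qed

lemma psd_cauchy_schwarz:
  fixes A :: "real^'m^'m"
  assumes "transpose A = A" "\<forall>z. 0 \<le> z \<bullet> (A *v z)"
  shows "(y \<bullet> (A *v x))\<^sup>2 \<le> (x \<bullet> (A *v x)) * (y \<bullet> (A *v y))"
proof (rule nonneg_quadratic_discriminant)
  show "\<forall>t. 0 \<le> x \<bullet> (A *v x) + 2 * t * (y \<bullet> (A *v x)) + t\<^sup>2 * (y \<bullet> (A *v y))"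
    using assms by (metis quadratic_form_add_scaleR)
qed (use assms(2) in blast)

lemma psd_quadratic_form_eq_0_imp_mult_eq_0:
  fixes A :: "real^'m^'m"
  assumes "transpose A = A" "\<forall>z. 0 \<le> z \<bullet> (A *v z)" "x \<bullet> (A *v x) = 0"
  shows "A *v x = 0"
proof -
  have "((A *v x) \<bullet> (A *v x))\<^sup>2 \<le> (x \<bullet> (A *v x)) * ((A *v x) \<bullet> (A *v (A *v x)))"
    by (rule psd_cauchy_schwarz[OF assms(1,2)])
  then have "((A *v x) \<bullet> (A *v x))\<^sup>2 \<le> 0"
    by (simp only: assms(3) mult_zero_left)
  then show ?thesis by simp
qed

lemma mnorm_triangle:
  fixes A :: "real^'m^'m"
  assumes "transpose A = A" "\<forall>z. 0 \<le> z \<bullet> (A *v z)"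
  shows "mnorm A (x + y) \<le> mnorm A x + mnorm A y"
proof -
  define a b c where "a = x \<bullet> (A *v x)" "b = y \<bullet> (A *v x)" "c = y \<bullet> (A *v y)"
  have "a \<ge> 0" "c \<ge> 0" using assms(2) by (simp_all add: a_b_c_def)
  have "b \<le> sqrt a * sqrt c"
    using psd_cauchy_schwarz[OF assms, of y x] \<open>a \<ge> 0\<close> \<open>c \<ge> 0\<close>
    by (metis a_b_c_def real_le_rsqrt real_sqrt_mult abs_le_D1 real_sqrt_abs)
  then have "(x + y) \<bullet> (A *v (x + y)) \<le> (sqrt a + sqrt c)\<^sup>2"
    using quadratic_form_add_scaleR[OF assms(1), of x 1 y] \<open>a \<ge> 0\<close> \<open>c \<ge> 0\<close>
    by (simp add: a_b_c_def power2_eq_square algebra_simps)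
  then have "mnorm A (x + y) \<le> sqrt ((sqrt a + sqrt c)\<^sup>2)"
    unfolding mnorm_def by (rule real_sqrt_le_mono)
  then show ?thesis using \<open>a \<ge> 0\<close> \<open>c \<ge> 0\<close> by (simp add: mnorm_def a_b_c_def)
qed

lemma mnorm_minus: "mnorm A (- x) = mnorm A x"
  by (simp add: mnorm_def vec.neg)

section \<open>Extreme eigenvalues of symmetric matrices\<close>

lemma eigvecs_orthogonal_symmetric:
  fixes A :: "real^'m^'m"
  assumes "transpose A = A" "A *v v = a *\<^sub>R v" "A *v w = b *\<^sub>R w" "a \<noteq> b"
  shows "v \<bullet> w = 0"
proof -
  have "b * (v \<bullet> w) = a * (v \<bullet> w)"
    using inner_symmetric_mult[OF assms(1), of v w] assms(2,3) by simp
  then show ?thesis using assms(4) by simp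
qed

lemma finite_eigvals_symmetric:
  fixes A :: "real^'m^'m"
  assumes "transpose A = A"
  shows "finite (eigvals A)"
proof -
  have "\<forall>c\<in>eigvals A. \<exists>v. v \<noteq> 0 \<and> A *v v = c *\<^sub>R v" by (simp add: eigvals_def)
  then obtain f where f: "\<And>c. c \<in> eigvals A \<Longrightarrow> f c \<noteq> 0 \<and> A *v f c = c *\<^sub>R f c"
    by metis
  have orth: "f a \<bullet> f b = 0" if "a \<in> eigvals A" "b \<in> eigvals A" "a \<noteq> b" for a b
    using eigvecs_orthogonal_symmetric[OF assms] f that by blast
  have "inj_on f (eigvals A)"
    by (rule inj_onI) (metis orth f inner_eq_zero_iff)
  moreover have "independent (f ` eigvals A)"
  proof (rule pairwise_orthogonal_independent)
    show "pairwise orthogonal (f ` eigvals A)"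
      unfolding pairwise_def orthogonal_def by (metis orth imageE)
  qed (use f in auto)
  then have "finite (f ` eigvals A)" by (rule finiteI_independent)
  ultimately show ?thesis by (metis finite_imageD)
qed

text \<open>The minimum of the Rayleigh quotient over the unit sphere is an eigenvalue: for the
  minimiser \<open>x\<^sub>0\<close> and minimum \<open>\<mu>\<close>, the form of \<open>A - \<mu> I\<close> is positive semidefinite and vanishes
  at \<open>x\<^sub>0\<close>.\<close>
lemma exists_eigval_le_rayleigh:
  fixes A :: "real^'m^'m"
  assumes "transpose A = A"
  obtains \<mu> where "\<mu> \<in> eigvals A" "\<And>x. \<mu> * (x \<bullet> x) \<le> x \<bullet> (A *v x)"
proof -
  have "continuous_on (sphere 0 1) (\<lambda>x. x \<bullet> (A *v x))"
    by (intro continuous_intros linear_continuous_on linear_linear[THEN iffD1]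
        matrix_vector_mul_linear)
  then have "\<exists>x0\<in>sphere 0 1. \<forall>y\<in>sphere 0 1. x0 \<bullet> (A *v x0) \<le> y \<bullet> (A *v y)"
    by (intro continuous_attains_inf compact_sphere) simp
  then obtain x0 where x0: "x0 \<in> sphere 0 1"
    and min: "\<And>y. y \<in> sphere 0 1 \<Longrightarrow> x0 \<bullet> (A *v x0) \<le> y \<bullet> (A *v y)"
    by blast
  define \<mu> where "\<mu> = x0 \<bullet> (A *v x0)"
  have x0_unit: "x0 \<bullet> x0 = 1" using x0 by (simp add: dot_square_norm)
  have le: "\<mu> * (x \<bullet> x) \<le> x \<bullet> (A *v x)" for x
  proof (cases "x = 0")
    case False
    have "\<mu> \<le> (x /\<^sub>R norm x) \<bullet> (A *v (x /\<^sub>R norm x))"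
      unfolding \<mu>_def by (rule min) (simp add: False)
    also have "\<dots> = (x \<bullet> (A *v x)) / (norm x)\<^sup>2"
      by (simp add: matrix_vector_mult_scaleR power2_eq_square field_simps)
    finally show ?thesis using False by (simp add: dot_square_norm field_simps)
  qed simp
  define B where "B = A - \<mu> *\<^sub>R mat 1"
  have B: "B *v x = A *v x - \<mu> *\<^sub>R x" for x
    by (simp add: B_def matrix_vector_mult_diff_rdistrib scaleR_matrix_vector_assoc[symmetric])
  have "transpose B = B"
    using assms by (simp add: B_def transpose_def vec_eq_iff mat_def)
  moreover have "\<forall>z. 0 \<le> z \<bullet> (B *v z)"
    using le by (simp add: B inner_diff_right)
  moreover have "x0 \<bullet> (B *v x0) = 0"
    by (simp add: B inner_diff_right x0_unit \<mu>_def)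
  ultimately have "B *v x0 = 0" by (rule psd_quadratic_form_eq_0_imp_mult_eq_0)
  then have "A *v x0 = \<mu> *\<^sub>R x0" by (simp add: B)
  moreover have "x0 \<noteq> 0" using x0_unit by auto
  ultimately have "\<mu> \<in> eigvals A" unfolding eigvals_def by blast
  with le that show ?thesis by blast
qed

lemma lambda_min_le_rayleigh:
  fixes A :: "real^'m^'m"
  assumes "transpose A = A"
  shows "lambda_min A * (x \<bullet> x) \<le> x \<bullet> (A *v x)"
proof -
  obtain \<mu> where \<mu>: "\<mu> \<in> eigvals A" "\<And>x. \<mu> * (x \<bullet> x) \<le> x \<bullet> (A *v x)"
    using exists_eigval_le_rayleigh[OF assms] by blast
  have "lambda_min A \<le> \<mu>"
    unfolding lambda_min_def using \<mu>(1) finite_eigvals_symmetric[OF assms] by simp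
  then show ?thesis
    using \<mu>(2)[of x] by (meson inner_ge_zero mult_right_mono order_trans)
qed

lemma rayleigh_le_lambda_max:
  fixes A :: "real^'m^'m"
  assumes "transpose A = A"
  shows "x \<bullet> (A *v x) \<le> lambda_max A * (x \<bullet> x)"
proof -
  have neg: "(- A) *v y = - (A *v y)" for y
    using scaleR_matrix_vector_assoc[of "-1" A y] by simp
  have "transpose (- A) = - A" using assms transpose_scalar[of "-1" A] by simp
  then obtain \<mu> where \<mu>: "\<mu> \<in> eigvals (- A)" "\<And>x. \<mu> * (x \<bullet> x) \<le> x \<bullet> ((- A) *v x)"
    using exists_eigval_le_rayleigh by blast
  from \<mu>(1) obtain w where w: "w \<noteq> 0" "- (A *v w) = \<mu> *\<^sub>R w"
    unfolding eigvals_def neg by blast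
  then have "A *v w = (- \<mu>) *\<^sub>R w" by (metis minus_minus scaleR_minus_left)
  with w(1) have "- \<mu> \<in> eigvals A" unfolding eigvals_def by blast
  then have "- \<mu> \<le> lambda_max A"
    unfolding lambda_max_def using finite_eigvals_symmetric[OF assms] by simp
  have "x \<bullet> (A *v x) \<le> (- \<mu>) * (x \<bullet> x)"
    using \<mu>(2)[of x] by (simp add: neg)
  also have "\<dots> \<le> lambda_max A * (x \<bullet> x)"
    using \<open>- \<mu> \<le> lambda_max A\<close> by (rule mult_right_mono) simp
  finally show ?thesis .
qed

section \<open>Orthogonal projections and the pseudoinverse\<close>

lemma orthogonal_projection_pythagoras:
  fixes Q :: "real^'m^'m"
  assumes "transpose Q = Q" "Q ** Q = Q"
  shows "x \<bullet> x = (Q *v x) \<bullet> (Q *v x) + (x - Q *v x) \<bullet> (x - Q *v x)"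
proof -
  have "(Q *v x) \<bullet> (Q *v x) = x \<bullet> (Q *v (Q *v x))"
    by (metis assms(1) inner_transpose_mult)
  also have "\<dots> = (Q *v x) \<bullet> x"
    using assms(2) by (simp add: matrix_vector_mul_assoc inner_commute)
  finally show ?thesis
    by (simp add: inner_diff_left inner_diff_right inner_commute)
qed

lemma orthogonal_projection_residual_orthogonal:
  fixes Q :: "real^'m^'m"
  assumes "transpose Q = Q" "Q *v u = u"
  shows "(x - Q *v x) \<bullet> u = 0"
  using inner_symmetric_mult[OF assms(1), of x u] assms(2) by (simp add: inner_diff_left)

lemma matrix_inv_invertible:
  fixes A :: "real^'n^'n"
  assumes "invertible A"
  shows "A ** matrix_inv A = mat 1" "matrix_inv A ** A = mat 1"
  using someI_ex[OF assms[unfolded invertible_def]] by (simp_all add: matrix_inv_def)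

lemma symmetric_matrix_inv:
  fixes A :: "real^'n^'n"
  assumes "invertible A" "transpose A = A"
  shows "transpose (matrix_inv A) = matrix_inv A"
proof -
  have "transpose (matrix_inv A) ** A = mat 1"
    using matrix_inv_invertible(1)[OF assms(1)] assms(2) by (metis matrix_transpose_mul transpose_mat)
  then show ?thesis
    by (metis matrix_inv_invertible(1)[OF assms(1)] matrix_mul_assoc matrix_mul_lid matrix_mul_rid)
qed

lemma invertible_gram_full_row_rank:
  fixes P :: "real^'N^'n"
  assumes "rank P = CARD('n)"
  shows "invertible (P ** transpose P)"
proof -
  have inj: "inj ((*v) (transpose P))"
    using assms rank_transpose[of P] full_rank_injective[of "transpose P"] by simp
  have "y = 0" if "(P ** transpose P) *v y = 0" for y
  proof -
    have "(transpose P *v y) \<bullet> (transpose P *v y) = 0"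
      using that by (metis inner_transpose_mult transpose_transpose matrix_vector_mul_assoc inner_zero_right)
    then have "transpose P *v y = transpose P *v 0" by simp
    with inj show ?thesis by (rule injD)
  qed
  then show ?thesis
    by (simp add: invertible_left_inverse matrix_left_invertible_ker)
qed

lemma is_pinv_full_row_rank:
  fixes P :: "real^'N^'n"
  assumes "rank P = CARD('n)"
  shows "is_pinv P (transpose P ** matrix_inv (P ** transpose P))"
proof -
  define M where "M = matrix_inv (P ** transpose P)"
  have PM: "P ** (transpose P ** M) = mat 1"
    using matrix_inv_invertible(1)[OF invertible_gram_full_row_rank[OF assms]]
    by (simp add: M_def matrix_mul_assoc)
  have M_sym: "transpose M = M"
    unfolding M_def
    by (intro symmetric_matrix_inv invertible_gram_full_row_rank assms) (simp add: matrix_transpose_mul)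
  show ?thesis
    unfolding is_pinv_def M_def[symmetric]
  proof (intro conjI)
    show "P ** (transpose P ** M) ** P = P" "transpose (P ** (transpose P ** M)) = P ** (transpose P ** M)"
      using PM by simp_all
    show "transpose P ** M ** P ** (transpose P ** M) = transpose P ** M"
      using PM by (metis matrix_mul_assoc matrix_mul_rid)
    show "transpose (transpose P ** M ** P) = transpose P ** M ** P"
      using M_sym by (simp add: matrix_transpose_mul matrix_mul_assoc)
  qed
qed

lemma is_pinv_full_row_rank_unique:
  fixes P :: "real^'N^'n"
  assumes "rank P = CARD('n)" "is_pinv P Y"
  shows "Y = transpose P ** matrix_inv (P ** transpose P)"
proof -
  define G where "G = P ** transpose P"
  have GM: "G ** matrix_inv G = mat 1" "matrix_inv G ** G = mat 1"
    using matrix_inv_invertible[OF invertible_gram_full_row_rank[OF assms(1)]] by (simp_all add: G_def)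
  have Y: "P ** Y ** P = P" "Y ** P ** Y = Y" "transpose (Y ** P) = Y ** P"
    using assms(2) unfolding is_pinv_def by auto
  have "(P ** Y) ** G = G" using Y(1) by (metis G_def matrix_mul_assoc)
  then have PY: "P ** Y = mat 1" using GM by (metis matrix_mul_assoc matrix_mul_rid)
  have "Y = transpose (Y ** P) ** Y" using Y(2,3) by simp
  then have Y_eq: "Y = transpose P ** (transpose Y ** Y)"
    by (simp add: matrix_transpose_mul matrix_mul_assoc)
  then have "G ** (transpose Y ** Y) = mat 1" using PY by (metis G_def matrix_mul_assoc)
  then have "transpose Y ** Y = matrix_inv G"
    using GM by (metis matrix_mul_assoc matrix_mul_lid matrix_mul_rid)
  then show ?thesis using Y_eq by (simp add: G_def)
qed

lemma pinv_full_row_rank: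
  fixes P :: "real^'N^'n"
  assumes "rank P = CARD('n)"
  shows "pinv P = transpose P ** matrix_inv (P ** transpose P)"
  unfolding pinv_def
  using is_pinv_full_row_rank[OF assms] is_pinv_full_row_rank_unique[OF assms] by (rule the_equality)

lemma similar_on_energy_le:
  assumes "similar_on P L R \<epsilon>" "x \<in> R" "\<forall>z. 0 \<le> z \<bullet> (L *v z)"
  shows "(x - (pinv P ** P) *v x) \<bullet> (L *v (x - (pinv P ** P) *v x)) \<le> \<epsilon>\<^sup>2 * (x \<bullet> (L *v x))"
proof -
  have "0 \<le> \<epsilon>" "mnorm L (x - (pinv P ** P) *v x) \<le> \<epsilon> * mnorm L x"
    using assms(1,2) by (auto simp: similar_on_def)
  then have "(mnorm L (x - (pinv P ** P) *v x))\<^sup>2 \<le> (\<epsilon> * mnorm L x)\<^sup>2"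
    using assms(3) by (intro power_mono) (auto simp: mnorm_def)
  then show ?thesis using assms(3) by (simp add: mnorm_def power_mult_distrib)
qed

section \<open>The coarsened matrix\<close>

locale coarsening =
  fixes L :: "real^'N^'N" and P :: "real^'N^'n"
    and lam :: "nat \<Rightarrow> real" and u :: "nat \<Rightarrow> real^'N"
    and lt :: "nat \<Rightarrow> real" and v :: "nat \<Rightarrow> real^'n"
  assumes L_sym: "transpose L = L"
    and L_psd: "\<forall>x. 0 \<le> x \<bullet> (L *v x)"
    and u_eig: "\<forall>i\<in>{1..CARD('N)}. L *v u i = lam i *\<^sub>R u i"
    and u_orth: "orthonormal_on {1..CARD('N)} u"
    and lam_mono: "mono_on {1..CARD('N)} lam"
    and lam1: "lam 1 = 0"
    and P_rank: "rank P = CARD('n)"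
    and v_eig: "\<forall>i\<in>{1..CARD('n)}. (transpose (pinv P) ** L ** pinv P) *v v i = lt i *\<^sub>R v i"
    and v_orth: "orthonormal_on {1..CARD('n)} v"
    and lt_mono: "mono_on {1..CARD('n)} lt"
begin

abbreviation Lc :: "real^'n^'n" where "Lc \<equiv> transpose (pinv P) ** L ** pinv P"
abbreviation proj :: "real^'N^'N" where "proj \<equiv> pinv P ** P"
abbreviation Ginv :: "real^'n^'n" where "Ginv \<equiv> matrix_inv (P ** transpose P)"

lemma card_coarse_le: "CARD('n) \<le> CARD('N)"
  using rank_bound[of P] P_rank by simp

lemma lam_nonneg: "i \<in> {1..CARD('N)} \<Longrightarrow> 0 \<le> lam i"
  using mono_onD[OF lam_mono, of 1 i] lam1 by simp

lemma P_mult_pinv: "P ** pinv P = mat 1"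
  using matrix_inv_invertible(1)[OF invertible_gram_full_row_rank[OF P_rank]]
  by (simp add: pinv_full_row_rank[OF P_rank] matrix_mul_assoc)

lemma Ginv_sym: "transpose Ginv = Ginv"
  by (intro symmetric_matrix_inv invertible_gram_full_row_rank P_rank) (simp add: matrix_transpose_mul)

lemma inner_pinv_self: "(pinv P *v y) \<bullet> (pinv P *v y) = y \<bullet> (Ginv *v y)"
proof -
  have "transpose (pinv P) ** pinv P = Ginv ** (P ** pinv P)"
    by (simp add: pinv_full_row_rank[OF P_rank] matrix_transpose_mul Ginv_sym matrix_mul_assoc)
  then have XX: "transpose (pinv P) ** pinv P = Ginv" by (simp add: P_mult_pinv)
  have "(pinv P *v y) \<bullet> (pinv P *v y) = y \<bullet> (transpose (pinv P) *v (pinv P *v y))"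
    by (metis inner_transpose_mult transpose_transpose inner_commute)
  also have "\<dots> = y \<bullet> (Ginv *v y)"
    by (simp only: matrix_vector_mul_assoc XX)
  finally show ?thesis .
qed

lemma quadratic_form_Lc: "y \<bullet> (Lc *v y) = (pinv P *v y) \<bullet> (L *v (pinv P *v y))"
proof -
  have "Lc *v y = transpose (pinv P) *v (L *v (pinv P *v y))"
    by (simp only: matrix_vector_mul_assoc matrix_mul_assoc)
  then show ?thesis
    by (metis inner_transpose_mult transpose_transpose inner_commute)
qed

lemma proj_sym: "transpose proj = proj"
  by (simp add: pinv_full_row_rank[OF P_rank] matrix_transpose_mul Ginv_sym matrix_mul_assoc)

lemma proj_idem: "proj ** proj = proj"
  by (metis P_mult_pinv matrix_mul_assoc matrix_mul_lid)

lemma proj_mult: "proj *v x = pinv P *v (P *v x)"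
  by (simp add: matrix_vector_mul_assoc)

lemma lam2_pos:
  assumes "k \<in> {1..CARD('N)}" "\<epsilon>\<^sup>2 * lam k < lam 2"
  shows "0 < lam 2"
proof -
  have "0 \<le> \<epsilon>\<^sup>2 * lam k" using lam_nonneg[OF assms(1)] by simp
  with assms(2) show ?thesis by linarith
qed

lemma lambda_min_mult_eigval_le_coarse_eigval:
  assumes "1 \<le> k" "k \<le> CARD('n)"
  shows "lambda_min Ginv * lam k \<le> lt k"
proof -
  let ?V = "span (v ` {1..k})"
  have orth: "orthonormal_on {1..k} v"
    using assms(2) by (intro orthonormal_on_subset[OF v_orth]) auto
  have "inj ((*v) (pinv P))"
    by (rule injI) (metis P_mult_pinv matrix_vector_mul_assoc matrix_vector_mul_lid)
  then have "dim ((*v) (pinv P) ` ?V) = k"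
    using eucl.dim_image_eq[OF matrix_vector_mul_linear, of "pinv P" ?V] dim_span_orthonormal_on[OF orth]
    by (simp add: inj_on_subset)
  moreover have "subspace ((*v) (pinv P) ` ?V)"
    by (intro linear_subspace_image matrix_vector_mul_linear subspace_span)
  ultimately obtain x where x: "x \<in> (*v) (pinv P) ` ?V" "x \<noteq> 0" "lam k * (x \<bullet> x) \<le> x \<bullet> (L *v x)"
    using subspace_rayleigh_ge_eigval[OF u_orth u_eig lam_mono _ assms(1)] by (metis order_refl)
  then obtain y where y: "y \<in> ?V" "x = pinv P *v y" by blast
  have "y \<noteq> 0" using x(2) y(2) by auto
  have "lam k * (lambda_min Ginv * (y \<bullet> y)) \<le> lam k * (x \<bullet> x)"
    using lambda_min_le_rayleigh[OF Ginv_sym, of y] lam_nonneg[of k] assms card_coarse_le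
    by (intro mult_left_mono) (auto simp: y(2) inner_pinv_self)
  also have "\<dots> \<le> y \<bullet> (Lc *v y)"
    using x(3) by (simp add: y(2) quadratic_form_Lc)
  also have "\<dots> \<le> lt k * (y \<bullet> y)"
    using v_eig lt_mono assms
    by (intro rayleigh_span_eigvecs_le[OF _ orth _ y(1)]) (auto intro: mono_onD)
  finally show ?thesis
    using \<open>y \<noteq> 0\<close> by (simp add: mult.assoc mult.left_commute[of "lam k"])
qed

lemma inner_proj_ge:
  assumes "1 \<le> k" "k \<le> CARD('N)" "proj *v u 1 = u 1"
    and "similar_on P L (span (u ` {1..k})) \<epsilon>" "\<epsilon>\<^sup>2 * lam k < lam 2"
    and "x \<in> span (u ` {1..k})"
  shows "(1 - \<epsilon>\<^sup>2 * (lam k / lam 2)) * (x \<bullet> x) \<le> (proj *v x) \<bullet> (proj *v x)"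
proof -
  define e where "e = x - proj *v x"
  have lam2: "0 < lam 2" using assms(1,2,5) by (intro lam2_pos[of k]) auto
  have "lam 2 * (e \<bullet> e) \<le> e \<bullet> (L *v e)"
    using orthogonal_projection_residual_orthogonal[OF proj_sym assms(3)]
    by (intro spectral_gap_rayleigh[OF u_orth u_eig lam_mono]) (simp add: e_def)
  also have "\<dots> \<le> \<epsilon>\<^sup>2 * (x \<bullet> (L *v x))"
    unfolding e_def using assms(4,6) L_psd by (rule similar_on_energy_le)
  also have "\<dots> \<le> \<epsilon>\<^sup>2 * (lam k * (x \<bullet> x))"
    using u_eig lam_mono assms(1,2)
    by (intro mult_left_mono rayleigh_span_eigvecs_le[OF _ _ _ assms(6)] orthonormal_on_subset[OF u_orth])
      (auto intro: mono_onD)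
  finally have "e \<bullet> e \<le> \<epsilon>\<^sup>2 * (lam k / lam 2) * (x \<bullet> x)"
    using lam2 by (simp add: field_simps)
  moreover have "x \<bullet> x = (proj *v x) \<bullet> (proj *v x) + e \<bullet> e"
    unfolding e_def by (rule orthogonal_projection_pythagoras[OF proj_sym proj_idem])
  ultimately show ?thesis unfolding left_diff_distrib mult_1 by linarith
qed

lemma energy_proj_le:
  assumes "k \<le> CARD('N)" "similar_on P L (span (u ` {1..k})) \<epsilon>" "x \<in> span (u ` {1..k})"
  shows "(proj *v x) \<bullet> (L *v (proj *v x)) \<le> (1 + \<epsilon>)\<^sup>2 * lam k * (x \<bullet> x)"
proof -
  have "0 \<le> \<epsilon>" and sim: "mnorm L (x - proj *v x) \<le> \<epsilon> * mnorm L x"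
    using assms(2,3) by (auto simp: similar_on_def)
  have "mnorm L (proj *v x) \<le> mnorm L x + mnorm L (proj *v x - x)"
    using mnorm_triangle[OF L_sym L_psd, of x "proj *v x - x"] by simp
  also have "mnorm L (proj *v x - x) = mnorm L (x - proj *v x)"
    using mnorm_minus[of L "x - proj *v x"] by simp
  also have "mnorm L x + \<dots> \<le> (1 + \<epsilon>) * mnorm L x"
    using sim by (simp add: algebra_simps)
  finally have "(mnorm L (proj *v x))\<^sup>2 \<le> ((1 + \<epsilon>) * mnorm L x)\<^sup>2"
    using L_psd by (intro power_mono) (auto simp: mnorm_def)
  then have "(proj *v x) \<bullet> (L *v (proj *v x)) \<le> (1 + \<epsilon>)\<^sup>2 * (x \<bullet> (L *v x))"
    using L_psd by (simp add: mnorm_def power_mult_distrib)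
  also have "\<dots> \<le> (1 + \<epsilon>)\<^sup>2 * (lam k * (x \<bullet> x))"
    using u_eig lam_mono assms(1)
    by (intro mult_left_mono rayleigh_span_eigvecs_le[OF _ _ _ assms(3)] orthonormal_on_subset[OF u_orth])
      (auto intro: mono_onD)
  finally show ?thesis by (simp add: mult.assoc)
qed

lemma dim_P_image_eigvecs_span:
  assumes "1 \<le> k" "k \<le> CARD('N)" "proj *v u 1 = u 1"
    and "similar_on P L (span (u ` {1..k})) \<epsilon>" "\<epsilon>\<^sup>2 * lam k < lam 2"
  shows "dim ((*v) P ` span (u ` {1..k})) = k"
proof -
  let ?U = "span (u ` {1..k})"
  have "0 < lam 2" using assms(1,2,5) by (intro lam2_pos[of k]) auto
  with assms(5) have D: "0 < 1 - \<epsilon>\<^sup>2 * (lam k / lam 2)" by (simp add: field_simps)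
  have "x = 0" if "x \<in> ?U" "P *v x = 0" for x
  proof -
    have "(1 - \<epsilon>\<^sup>2 * (lam k / lam 2)) * (x \<bullet> x) \<le> 0"
      using inner_proj_ge[OF assms that(1)] that(2) by (simp add: proj_mult)
    with D have "x \<bullet> x \<le> 0" by (simp add: mult_le_0_iff)
    then show ?thesis by (meson inner_gt_zero_iff not_le)
  qed
  then have "inj_on ((*v) P) (span ?U)"
    by (simp add: linear_inj_on_iff_eq_0[OF matrix_vector_mul_linear] span_span)
  then have "dim ((*v) P ` ?U) = dim ?U"
    by (rule eucl.dim_image_eq[OF matrix_vector_mul_linear])
  also have "\<dots> = k"
    using dim_span_orthonormal_on[OF orthonormal_on_subset[OF u_orth, of "{1..k}"]] assms(1,2)
    by simp
  finally show ?thesis .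
qed

lemma coarse_eigval_le_lambda_max_mult_eigval:
  assumes "1 \<le> k" "k \<le> CARD('n)" "proj *v u 1 = u 1"
    and "similar_on P L (span (u ` {1..k})) \<epsilon>" "\<epsilon>\<^sup>2 * lam k < lam 2"
  shows "lt k \<le> lambda_max Ginv * ((1 + \<epsilon>)\<^sup>2 / (1 - \<epsilon>\<^sup>2 * (lam k / lam 2))) * lam k"
proof -
  let ?U = "span (u ` {1..k})"
  define D where "D = 1 - \<epsilon>\<^sup>2 * (lam k / lam 2)"
  have kN: "k \<le> CARD('N)" using assms(2) card_coarse_le by simp
  have "0 \<le> lam k" using assms(1) kN by (simp add: lam_nonneg)
  have "0 < lam 2" using assms(1,5) kN by (intro lam2_pos[of k]) auto
  with assms(5) have "0 < D" by (simp add: D_def field_simps)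
  note proj_ge = inner_proj_ge[OF assms(1) kN assms(3-5), folded D_def]
  have "dim ((*v) P ` ?U) = k"
    using assms(1) kN assms(3-5) by (rule dim_P_image_eigvecs_span)
  moreover have "subspace ((*v) P ` ?U)"
    by (intro linear_subspace_image matrix_vector_mul_linear subspace_span)
  ultimately obtain y where y: "y \<in> (*v) P ` ?U" "y \<noteq> 0" "lt k * (y \<bullet> y) \<le> y \<bullet> (Lc *v y)"
    using subspace_rayleigh_ge_eigval[OF v_orth v_eig lt_mono _ assms(1)] by (metis order_refl)
  then obtain x where x: "x \<in> ?U" "y = P *v x" by blast
  have "lt k * (y \<bullet> y) \<le> (proj *v x) \<bullet> (L *v (proj *v x))"
    using y(3) by (simp add: x(2) quadratic_form_Lc proj_mult)
  also have "\<dots> \<le> (1 + \<epsilon>)\<^sup>2 * lam k * (x \<bullet> x)"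
    using kN assms(4) x(1) by (rule energy_proj_le)
  also have "\<dots> \<le> (1 + \<epsilon>)\<^sup>2 * lam k * ((proj *v x) \<bullet> (proj *v x) / D)"
    using proj_ge[OF x(1)] \<open>0 < D\<close> \<open>0 \<le> lam k\<close> by (intro mult_left_mono) (simp_all add: field_simps)
  also have "\<dots> \<le> (1 + \<epsilon>)\<^sup>2 * lam k * (lambda_max Ginv * (y \<bullet> y) / D)"
    using rayleigh_le_lambda_max[OF Ginv_sym, of y] \<open>0 < D\<close> \<open>0 \<le> lam k\<close>
    by (intro mult_left_mono divide_right_mono) (simp_all add: x(2) proj_mult inner_pinv_self)
  finally have "lt k * (y \<bullet> y) \<le> (lambda_max Ginv * ((1 + \<epsilon>)\<^sup>2 / D) * lam k) * (y \<bullet> y)"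
    by (simp add: field_simps)
  then have "lt k \<le> lambda_max Ginv * ((1 + \<epsilon>)\<^sup>2 / D) * lam k"
    by (rule mult_right_le_imp_le) (simp add: y(2))
  then show ?thesis by (simp only: D_def)
qed

end

theorem theorem2:
  fixes L :: "real^'N^'N" and P :: "real^'N^'n"
    and lam :: "nat \<Rightarrow> real" and u :: "nat \<Rightarrow> real^'N"
    and lt :: "nat \<Rightarrow> real" and v :: "nat \<Rightarrow> real^'n"
    and k :: nat and \<epsilon> :: real
  assumes N2: "CARD('N) \<ge> 2"
    and L_sym: "transpose L = L"
    and L_psd: "\<forall>x. 0 \<le> x \<bullet> (L *v x)"
    and u_eig: "\<forall>i\<in>{1..CARD('N)}. L *v u i = lam i *\<^sub>R u i"
    and u_orth: "\<forall>i\<in>{1..CARD('N)}. \<forall>j\<in>{1..CARD('N)}. u i \<bullet> u j = (if i = j then 1 else 0)"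
    and lam_sorted: "\<forall>i\<in>{1..CARD('N)}. \<forall>j\<in>{1..CARD('N)}. i \<le> j \<longrightarrow> lam i \<le> lam j"
    and lam1: "lam 1 = 0" and lam12: "lam 1 < lam 2"
    and P_rank: "rank P = CARD('n)"
    and Pi_u1: "(pinv P ** P) *v u 1 = u 1"
    and v_eig: "\<forall>i\<in>{1..CARD('n)}.
        (transpose (pinv P) ** L ** pinv P) *v v i = lt i *\<^sub>R v i"
    and v_orth: "\<forall>i\<in>{1..CARD('n)}. \<forall>j\<in>{1..CARD('n)}. v i \<bullet> v j = (if i = j then 1 else 0)"
    and lt_sorted: "\<forall>i\<in>{1..CARD('n)}. \<forall>j\<in>{1..CARD('n)}. i \<le> j \<longrightarrow> lt i \<le> lt j"
    and k: "1 \<le> k" "k \<le> CARD('n)"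
    and sim: "similar_on P L (span (u ` {1..k})) \<epsilon>"
    and eps: "\<epsilon>\<^sup>2 * lam k < lam 2"
  shows "lambda_min (matrix_inv (P ** transpose P)) * lam k \<le> lt k \<and>
         lt k \<le> lambda_max (matrix_inv (P ** transpose P))
                  * ((1 + \<epsilon>)\<^sup>2 / (1 - \<epsilon>\<^sup>2 * (lam k / lam 2))) * lam k"
proof -
  interpret coarsening L P lam u lt v
    using L_sym L_psd u_eig u_orth lam_sorted lam1 P_rank v_eig v_orth lt_sorted
    by unfold_locales (auto simp: orthonormal_on_def mono_on_def)
  show ?thesis
    using lambda_min_mult_eigval_le_coarse_eigval[OF k]
      coarse_eigval_le_lambda_max_mult_eigval[OF k Pi_u1 sim eps] by blast
qed

end
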